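(* Let $T$ be a triangulation of an unpunctured bordered surface $(S,M)$, let $\Sigma_{Q_{\overline T}}=(\{x_1,\dots,x_n\},\{F_1,\dots,F_n\})$ be its associated LP seed, and let $i\in\{1,\dots,n\}$. Then $\hat F_i=F_i$ if and only if $F_i\neq F_j$ for every $j\neq i$.
   Context: $(S,M)$: compact surface (possibly non-orientable) with nonempty boundary, marked points $M\subset\partial S$ meeting every boundary component, no punctures, not a monogon/digon/triangle; boundary segments carry variables generating the coefficient ring $R$. Quasi-arcs: arcs (up to isotopy) not bounding a Möbius strip with one marked point, and one-sided simple closed curves; compatible = disjoint, or the unique arc and one-sided curve in a Möbius strip with one marked point. Triangulation: maximal compatible set containing no one-sided curve; $x_1,\dots,x_n$ correspond to its arcs. Double cover and quiver: replace each cross-cap by a cylinder to get $\tilde S$, glue two copies along the new cylinder boundaries by the antipodal map (two oppositely oriented copies if $S$ orientable); $T$ lifts to $\overline T$, each arc/boundary segment $i$ having lifts $i,\tilde i$. $Q_{\overline T}$: vertices arcs and boundary segments of $\overline T$; arrow $i\to j$ for each triangle in which $j$ follows $i$ in the orientation; 2-cycles cancelled; $b_{ij}$ = (arrows $i\to j$) $-$ (arrows $j\to i$). $F_j=\prod_{b_{ij}+b_{\tilde ij}>0}x_i^{b_{ij}+b_{\tilde ij}}+\prod_{b_{ij}+b_{\tilde ij}<0}x_i^{-(b_{ij}+b_{\tilde ij})}$ over twin-pair representatives $i$. Normalisation (Lam–Pylyavskyy): $\hat F_j=F_j/\prod_{k\neq j}x_k^{a_k}$ where $a_k\ge0$ is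 maximal such that $F_k^{a_k}$ divides $F_j|_{x_k\leftarrow F_k/x}$ in $R[x_1,\dots,x_{k-1},x^{\pm1},x_{k+1},\dots,x_n]$. *)

theory Defs
  imports Main "HOL-Library.Poly_Mapping"
begin

text \<open>Each triangle t carries a fixed local orientation and sides (t,0),(t,1),(t,2) in this
cyclic order; side (t,s) runs from corner s to corner (s+1) mod 3.  The partial
involution gl glues sides in pairs (glued pairs = arcs of T, unglued sides = boundary
segments), and tw marks gluings that are orientation-incompatible (twisted).\<close>

type_synonym side = "nat \<times> nat"

definition sides :: "nat set \<Rightarrow> side set" where
  "sides Tr = Tr \<times> {0,1,2}"

definition valid_gluing :: "nat set \<Rightarrow> (side \<Rightarrow> side option) \<Rightarrow> (side \<Rightarrow> bool) \<Rightarrow> bool" where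
  "valid_gluing Tr gl tw \<longleftrightarrow> finite Tr \<and> Tr \<noteq> {} \<and>
     (\<forall>\<sigma>. gl \<sigma> \<noteq> None \<longrightarrow> \<sigma> \<in> sides Tr) \<and>
     (\<forall>\<sigma> \<sigma>'. gl \<sigma> = Some \<sigma>' \<longrightarrow> \<sigma>' \<in> sides Tr \<and> \<sigma>' \<noteq> \<sigma> \<and> gl \<sigma>' = Some \<sigma> \<and> tw \<sigma>' = tw \<sigma>)"

text \<open>Identification of corners induced by the gluing of sides.\<close>
definition corner_step :: "(side \<Rightarrow> side option) \<Rightarrow> (side \<Rightarrow> bool) \<Rightarrow> ((nat \<times> nat) \<times> (nat \<times> nat)) set" where
  "corner_step gl tw =
     {((t,s),(t',(s'+1) mod 3)) | t s t' s'. gl (t,s) = Some (t',s') \<and> \<not> tw (t,s)} \<union>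
     {((t,(s+1) mod 3),(t',s')) | t s t' s'. gl (t,s) = Some (t',s') \<and> \<not> tw (t,s)} \<union>
     {((t,s),(t',s')) | t s t' s'. gl (t,s) = Some (t',s') \<and> tw (t,s)} \<union>
     {((t,(s+1) mod 3),(t',(s'+1) mod 3)) | t s t' s'. gl (t,s) = Some (t',s') \<and> tw (t,s)}"

definition boundary_corner :: "(side \<Rightarrow> side option) \<Rightarrow> nat \<times> nat \<Rightarrow> bool" where
  "boundary_corner gl \<kappa> \<longleftrightarrow> gl (fst \<kappa>, snd \<kappa>) = None \<or> gl (fst \<kappa>, (snd \<kappa> + 2) mod 3) = None"

text \<open>No punctures: every vertex (class of corners) is a marked point on the boundary.\<close>
definition no_punctures :: "nat set \<Rightarrow> (side \<Rightarrow> side option) \<Rightarrow> (side \<Rightarrow> bool) \<Rightarrow> bool" where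
  "no_punctures Tr gl tw \<longleftrightarrow>
     (\<forall>\<kappa> \<in> Tr \<times> {0,1,2}. \<exists>\<kappa>'. (\<kappa>, \<kappa>') \<in> (corner_step gl tw)\<^sup>* \<and> boundary_corner gl \<kappa>')"

definition tri_connected :: "nat set \<Rightarrow> (side \<Rightarrow> side option) \<Rightarrow> bool" where
  "tri_connected Tr gl \<longleftrightarrow>
     (\<forall>t \<in> Tr. \<forall>t' \<in> Tr. (t, t') \<in> {(a, b). \<exists>s s'. gl (a, s) = Some (b, s')}\<^sup>*)"

text \<open>No arc of T bounds a Moebius strip with one marked point: a triangle two of whose
sides are glued to each other with a twist must have its third side on the boundary.\<close>
definition no_moebius_arc :: "(side \<Rightarrow> side option) \<Rightarrow> (side \<Rightarrow> bool) \<Rightarrow> bool" where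
  "no_moebius_arc gl tw \<longleftrightarrow>
     (\<forall>t s s'. gl (t, s) = Some (t, s') \<and> tw (t, s) \<longrightarrow> gl (t, 3 - s - s') = None)"

text \<open>(S,M) is not a triangle (a monogon or digon admits no triangulation).\<close>
definition not_single_triangle :: "(side \<Rightarrow> side option) \<Rightarrow> bool" where
  "not_single_triangle gl \<longleftrightarrow> (\<exists>\<sigma>. gl \<sigma> \<noteq> None)"

definition triangulated_surface :: "nat set \<Rightarrow> (side \<Rightarrow> side option) \<Rightarrow> (side \<Rightarrow> bool) \<Rightarrow> bool" where
  "triangulated_surface Tr gl tw \<longleftrightarrow> valid_gluing Tr gl tw \<and> tri_connected Tr gl \<and>
     no_punctures Tr gl tw \<and> no_moebius_arc gl tw \<and> not_single_triangle gl"

definition edge_of :: "(side \<Rightarrow> side option) \<Rightarrow> side \<Rightarrow> side set" where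
  "edge_of gl \<sigma> = insert \<sigma> {\<sigma>'. gl \<sigma> = Some \<sigma>'}"

definition edges :: "nat set \<Rightarrow> (side \<Rightarrow> side option) \<Rightarrow> side set set" where
  "edges Tr gl = edge_of gl ` sides Tr"

definition arcs :: "nat set \<Rightarrow> (side \<Rightarrow> side option) \<Rightarrow> side set set" where
  "arcs Tr gl = edge_of gl ` {\<sigma> \<in> sides Tr. gl \<sigma> \<noteq> None}"

text \<open>Lifted sides are pairs (side, sheet); triangle (t,False) carries the orientation of t,
triangle (t,True) the opposite one.  A twisted gluing swaps sheets.\<close>
definition lift_edge :: "(side \<Rightarrow> side option) \<Rightarrow> (side \<Rightarrow> bool) \<Rightarrow> side \<times> bool \<Rightarrow> (side \<times> bool) set" where
  "lift_edge gl tw p = insert p {(\<sigma>', (if tw (fst p) then \<not> snd p else snd p)) | \<sigma>'. gl (fst p) = Some \<sigma>'}"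

definition next_side :: "bool \<Rightarrow> nat \<Rightarrow> nat" where
  "next_side \<epsilon> s = (if \<epsilon> then (s + 2) mod 3 else (s + 1) mod 3)"

text \<open>Number of arrows A \<rightarrow> B of the quiver of the lifted triangulation: one for each
triangle of the cover in which B follows A in the orientation.\<close>
definition arrows :: "nat set \<Rightarrow> (side \<Rightarrow> side option) \<Rightarrow> (side \<Rightarrow> bool) \<Rightarrow>
    (side \<times> bool) set \<Rightarrow> (side \<times> bool) set \<Rightarrow> nat" where
  "arrows Tr gl tw A B = card {(t, s, \<epsilon>). t \<in> Tr \<and> s < 3 \<and>
      lift_edge gl tw ((t, s), \<epsilon>) = A \<and> lift_edge gl tw ((t, next_side \<epsilon> s), \<epsilon>) = B}"

definition bQ :: "nat set \<Rightarrow> (side \<Rightarrow> side option) \<Rightarrow> (side \<Rightarrow> bool) \<Rightarrow>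
    (side \<times> bool) set \<Rightarrow> (side \<times> bool) set \<Rightarrow> int" where
  "bQ Tr gl tw A B = int (arrows Tr gl tw A B) - int (arrows Tr gl tw B A)"

definition lifts :: "(side \<Rightarrow> side option) \<Rightarrow> (side \<Rightarrow> bool) \<Rightarrow> side set \<Rightarrow> (side \<times> bool) set set" where
  "lifts gl tw I = lift_edge gl tw ` (I \<times> UNIV)"

definition chosen_lift :: "(side \<Rightarrow> side option) \<Rightarrow> (side \<Rightarrow> bool) \<Rightarrow> side set \<Rightarrow> (side \<times> bool) set" where
  "chosen_lift gl tw J = lift_edge gl tw ((SOME \<sigma>. \<sigma> \<in> J), False)"

definition bsum :: "nat set \<Rightarrow> (side \<Rightarrow> side option) \<Rightarrow> (side \<Rightarrow> bool) \<Rightarrow> side set \<Rightarrow> side set \<Rightarrow> int" where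
  "bsum Tr gl tw I J = (\<Sum>A \<in> lifts gl tw I. bQ Tr gl tw A (chosen_lift gl tw J))"

text \<open>Laurent polynomials with integer coefficients in variables indexed by the edges of T
(arcs give the cluster variables x_1..x_n, boundary segments the coefficient variables
generating R = Z[boundary variables]).\<close>
type_synonym 'v lpoly = "('v \<Rightarrow>\<^sub>0 int) \<Rightarrow>\<^sub>0 int"

definition lmono :: "('v \<Rightarrow>\<^sub>0 int) \<Rightarrow> 'v lpoly" where
  "lmono e = Poly_Mapping.single e 1"

definition lvar :: "'v \<Rightarrow> 'v lpoly" where
  "lvar v = lmono (Poly_Mapping.single v 1)"

definition lconst :: "int \<Rightarrow> 'v lpoly" where
  "lconst c = Poly_Mapping.single 0 c"

text \<open>Membership in R[x_1,..,x_{k-1},x^{\<plusminus>1},x_{k+1},..] (the Laurent variable x is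
represented by the variable k itself).\<close>
definition in_sub :: "'v \<Rightarrow> 'v lpoly \<Rightarrow> bool" where
  "in_sub k p \<longleftrightarrow> (\<forall>m \<in> Poly_Mapping.keys p. \<forall>v. v \<noteq> k \<longrightarrow> 0 \<le> Poly_Mapping.lookup m v)"

definition sub_dvd :: "'v \<Rightarrow> 'v lpoly \<Rightarrow> 'v lpoly \<Rightarrow> bool" where
  "sub_dvd k a b \<longleftrightarrow> (\<exists>c. in_sub k c \<and> b = a * c)"

definition subst_var :: "'v \<Rightarrow> 'v lpoly \<Rightarrow> 'v lpoly \<Rightarrow> 'v lpoly" where
  "subst_var k g p = (\<Sum>m \<in> Poly_Mapping.keys p. lconst (Poly_Mapping.lookup p m) *
      (\<Prod>v \<in> Poly_Mapping.keys m. (if v = k then g else lvar v) ^ nat (Poly_Mapping.lookup m v)))"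

definition exchange_poly :: "nat set \<Rightarrow> (side \<Rightarrow> side option) \<Rightarrow> (side \<Rightarrow> bool) \<Rightarrow> side set \<Rightarrow> side set lpoly" where
  "exchange_poly Tr gl tw J =
     lmono (\<Sum>I \<in> edges Tr gl. Poly_Mapping.single I (max (bsum Tr gl tw I J) 0)) +
     lmono (\<Sum>I \<in> edges Tr gl. Poly_Mapping.single I (max (- bsum Tr gl tw I J) 0))"

text \<open>a_k for F_j: maximal a with F_k^a dividing F_j with x_k replaced by F_k/x.\<close>
definition norm_exp :: "nat set \<Rightarrow> (side \<Rightarrow> side option) \<Rightarrow> (side \<Rightarrow> bool) \<Rightarrow> side set \<Rightarrow> side set \<Rightarrow> nat" where
  "norm_exp Tr gl tw J K = (GREATEST a. sub_dvd K ((exchange_poly Tr gl tw K) ^ a)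
      (subst_var K (exchange_poly Tr gl tw K * lmono (Poly_Mapping.single K (-1)))
         (exchange_poly Tr gl tw J)))"

definition normalized_exchange_poly :: "nat set \<Rightarrow> (side \<Rightarrow> side option) \<Rightarrow> (side \<Rightarrow> bool) \<Rightarrow> side set \<Rightarrow> side set lpoly" where
  "normalized_exchange_poly Tr gl tw J =
     exchange_poly Tr gl tw J *
     lmono (\<Sum>K \<in> arcs Tr gl - {J}. Poly_Mapping.single K (- int (norm_exp Tr gl tw J K)))"

end

theory Submission
  imports Defs Complex_Main
begin

text \<open>The exponents of F_J are the positive and negative parts of the numbers
b_{iJ} + b_{i~J}, which lie between -2 and 2, and x_K does not occur in F_K unless some
triangle has two sides glued with a twist; then the surface is a single triangle with a
single arc and both sides of the equivalence hold trivially.  Writing F_K = x^c + x^d,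
the exponent a_K of the normalisation of F_J is 1 if F_J = F_K and 0 otherwise.  For
F_K = 2 this is a parity argument: setting one variable, at which the exponents of F_J
differ, to 2 and all others to 1 makes F_J(F_K/x) odd, while the multiples of F_K^n = 2^n,
n \<ge> 1, stay even.  Otherwise evaluate at a complex point where x^c = -x^d, built from roots
of -1 and of \<i>: the substitution sends x_K to 0, and the point can be chosen so that
F_J does not vanish there, although every multiple of F_K does.\<close>

section \<open>Laurent monomials and the subring R[x_K^{\<plusminus>1}]\<close>

lemma lmono_add: "lmono a * lmono b = lmono (a + b)"
  by (simp add: lmono_def mult_single)

lemma lmono_0 [simp]: "lmono 0 = 1"
  by (simp add: lmono_def)

lemma lconst_mult_lmono: "lconst c * lmono m = Poly_Mapping.single m c"
  by (simp add: lconst_def lmono_def mult_single)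

lemma lvar_power: "lvar v ^ n = lmono (Poly_Mapping.single v (int n))"
  by (induction n) (simp_all add: lvar_def lmono_add single_add[symmetric] algebra_simps)

lemma prod_lmono: "finite S \<Longrightarrow> (\<Prod>v\<in>S. lmono (f v)) = lmono (\<Sum>v\<in>S. f v)"
  by (induction S rule: finite_induct) (simp_all add: lmono_add)

lemma sum_single_lookup_keys:
  "(\<Sum>m\<in>Poly_Mapping.keys p. Poly_Mapping.single m (Poly_Mapping.lookup p m)) = p"
  by (rule poly_mapping_eqI) (simp add: lookup_sum lookup_single when_def in_keys_iff)

lemma subst_var_id:
  assumes "\<forall>m\<in>Poly_Mapping.keys p. Poly_Mapping.lookup m K = 0 \<and> (\<forall>v. 0 \<le> Poly_Mapping.lookup m v)"
  shows "subst_var K g p = p"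
proof -
  have "lconst (Poly_Mapping.lookup p m) *
      (\<Prod>v\<in>Poly_Mapping.keys m. (if v = K then g else lvar v) ^ nat (Poly_Mapping.lookup m v))
      = Poly_Mapping.single m (Poly_Mapping.lookup p m)" if m: "m \<in> Poly_Mapping.keys p" for m
  proof -
    have "K \<notin> Poly_Mapping.keys m" using assms m by (simp add: in_keys_iff)
    then have "(\<Prod>v\<in>Poly_Mapping.keys m. (if v = K then g else lvar v) ^ nat (Poly_Mapping.lookup m v))
        = (\<Prod>v\<in>Poly_Mapping.keys m. lmono (Poly_Mapping.single v (int (nat (Poly_Mapping.lookup m v)))))"
      by (intro prod.cong) (auto simp: lvar_power)
    also have "\<dots> = lmono m"
      using assms m by (simp add: prod_lmono sum_single_lookup_keys)
    finally show ?thesis by (simp add: lconst_mult_lmono)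
  qed
  then show ?thesis
    unfolding subst_var_def by (simp add: sum_single_lookup_keys cong: sum.cong)
qed

lemma in_sub_add: "in_sub K p \<Longrightarrow> in_sub K q \<Longrightarrow> in_sub K (p + q)"
  unfolding in_sub_def using keys_add[of p q] by blast

lemma in_sub_mult: "in_sub K p \<Longrightarrow> in_sub K q \<Longrightarrow> in_sub K (p * q)"
  unfolding in_sub_def using keys_mult[of p q] by (fastforce simp: lookup_add)

lemma in_sub_zero: "in_sub K 0"
  unfolding in_sub_def by simp

lemma in_sub_one: "in_sub K 1"
  unfolding in_sub_def by simp

lemma in_sub_sum: "(\<And>x. x \<in> A \<Longrightarrow> in_sub K (f x)) \<Longrightarrow> in_sub K (\<Sum>x\<in>A. f x)"
  by (induction A rule: infinite_finite_induct) (auto simp: in_sub_zero in_sub_add)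

lemma in_sub_prod: "(\<And>x. x \<in> A \<Longrightarrow> in_sub K (f x)) \<Longrightarrow> in_sub K (\<Prod>x\<in>A. f x)"
  by (induction A rule: infinite_finite_induct) (auto simp: in_sub_one in_sub_mult)

lemma in_sub_power: "in_sub K p \<Longrightarrow> in_sub K (p ^ n)"
  by (induction n) (auto simp: in_sub_one in_sub_mult)

lemma in_sub_lmono: "(\<forall>v. v \<noteq> K \<longrightarrow> 0 \<le> Poly_Mapping.lookup m v) \<Longrightarrow> in_sub K (lmono m)"
  unfolding in_sub_def lmono_def by simp

lemma in_sub_lconst: "in_sub K (lconst c)"
  unfolding in_sub_def lconst_def by simp

lemma in_sub_lvar: "in_sub K (lvar v)"
  unfolding in_sub_def lvar_def lmono_def by (simp add: lookup_single when_def)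

lemma in_sub_subst_var: "in_sub K g \<Longrightarrow> in_sub K (subst_var K g p)"
  unfolding subst_var_def
  by (intro in_sub_sum in_sub_mult in_sub_lconst in_sub_prod in_sub_power) (auto simp: in_sub_lvar)

section \<open>Evaluation at complex points\<close>

definition mono_value :: "('v \<Rightarrow> complex) \<Rightarrow> ('v \<Rightarrow>\<^sub>0 int) \<Rightarrow> complex" where
  "mono_value val m = (\<Prod>u\<in>Poly_Mapping.keys m. val u powi Poly_Mapping.lookup m u)"

text \<open>Like subst_var, this raises to the power nat e, so negative
exponents are silently replaced by 0.\<close>
definition pmono_value :: "('v \<Rightarrow> complex) \<Rightarrow> ('v \<Rightarrow>\<^sub>0 int) \<Rightarrow> complex" where
  "pmono_value val m = (\<Prod>u\<in>Poly_Mapping.keys m. val u ^ nat (Poly_Mapping.lookup m u))"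

definition lin_ext :: "(('v \<Rightarrow>\<^sub>0 int) \<Rightarrow> complex) \<Rightarrow> 'v lpoly \<Rightarrow> complex" where
  "lin_ext f p = (\<Sum>m\<in>Poly_Mapping.keys p. of_int (Poly_Mapping.lookup p m) * f m)"

abbreviation lpoly_value :: "('v \<Rightarrow> complex) \<Rightarrow> 'v lpoly \<Rightarrow> complex" where
  "lpoly_value val \<equiv> lin_ext (mono_value val)"

lemma mono_value_superset:
  assumes "finite S" "Poly_Mapping.keys m \<subseteq> S"
  shows "mono_value val m = (\<Prod>u\<in>S. val u powi Poly_Mapping.lookup m u)"
  unfolding mono_value_def
  by (rule prod.mono_neutral_left[OF assms]) (simp add: in_keys_iff)

lemma mono_value_add:
  assumes "\<forall>u. val u \<noteq> 0"
  shows "mono_value val (m + n) = mono_value val m * mono_value val n"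
proof -
  let ?S = "Poly_Mapping.keys m \<union> Poly_Mapping.keys n"
  have S: "finite ?S" "Poly_Mapping.keys (m + n) \<subseteq> ?S"
    by (simp_all add: keys_add)
  then have "mono_value val (m + n) =
      (\<Prod>u\<in>?S. val u powi (Poly_Mapping.lookup m u + Poly_Mapping.lookup n u))"
    by (simp add: mono_value_superset[OF S(1)] lookup_add)
  also have "\<dots> =
      (\<Prod>u\<in>?S. val u powi Poly_Mapping.lookup m u * val u powi Poly_Mapping.lookup n u)"
    using assms by (simp add: power_int_add)
  also have "\<dots> = mono_value val m * mono_value val n"
    by (simp add: prod.distrib mono_value_superset[OF S(1)])
  finally show ?thesis .
qed

lemma mono_value_0 [simp]: "mono_value val 0 = 1"
  by (simp add: mono_value_def)

lemma mono_value_nonzero: "\<forall>u. val u \<noteq> 0 \<Longrightarrow> mono_value val m \<noteq> 0"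
  unfolding mono_value_def by (simp add: prod_zero_iff)

lemma mono_value_outside:
  assumes "finite D" "\<forall>u. u \<notin> D \<longrightarrow> val u = 1"
  shows "mono_value val m = (\<Prod>u\<in>D. val u powi Poly_Mapping.lookup m u)"
proof -
  have f: "finite (Poly_Mapping.keys m \<union> D)" using assms by simp
  have "mono_value val m = (\<Prod>u\<in>Poly_Mapping.keys m \<union> D. val u powi Poly_Mapping.lookup m u)"
    by (rule mono_value_superset[OF f]) auto
  also have "\<dots> = (\<Prod>u\<in>D. val u powi Poly_Mapping.lookup m u)"
    by (rule prod.mono_neutral_right[OF f]) (use assms in auto)
  finally show ?thesis .
qed

lemma mono_value_single_point:
  "mono_value (\<lambda>u. if u = w then x else 1) m = x powi Poly_Mapping.lookup m w"
  by (subst mono_value_outside[of "{w}"]) auto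

lemma mono_value_two_points: "w1 \<noteq> w2 \<Longrightarrow>
   mono_value (\<lambda>u. if u = w1 then x1 else if u = w2 then x2 else 1) m =
   x1 powi Poly_Mapping.lookup m w1 * x2 powi Poly_Mapping.lookup m w2"
  by (subst mono_value_outside[of "{w1, w2}"]) auto

lemma pmono_value_cong:
  "(\<And>u. u \<in> Poly_Mapping.keys m \<Longrightarrow> f u = g u) \<Longrightarrow> pmono_value f m = pmono_value g m"
  unfolding pmono_value_def by simp

lemma pmono_value_single_point:
  "pmono_value (\<lambda>u. if u = w then x else 1) m = x ^ nat (Poly_Mapping.lookup m w)"
proof (cases "w \<in> Poly_Mapping.keys m")
  case True
  then show ?thesis unfolding pmono_value_def by (simp add: prod.remove[OF finite_keys True])
next
  case False
  then show ?thesis unfolding pmono_value_def by (auto simp: in_keys_iff intro!: prod.neutral)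
qed

lemma pmono_value_eq_mono_value:
  "\<forall>u. 0 \<le> Poly_Mapping.lookup m u \<Longrightarrow> pmono_value val m = mono_value val m"
  unfolding pmono_value_def mono_value_def by (intro prod.cong refl) (simp add: power_int_def)

lemma pmono_value_eq_0: "val K = 0 \<Longrightarrow> 0 < Poly_Mapping.lookup m K \<Longrightarrow> pmono_value val m = 0"
  unfolding pmono_value_def by (rule prod_zero) (auto simp: in_keys_iff intro!: bexI[of _ K])

lemma pmono_value_nonzero:
  "\<forall>u \<in> Poly_Mapping.keys m. val u \<noteq> 0 \<Longrightarrow> pmono_value val m \<noteq> 0"
  unfolding pmono_value_def by (simp add: prod_zero_iff)

lemma lin_ext_add: "lin_ext f (p + q) = lin_ext f p + lin_ext f q"
proof -
  let ?S = "Poly_Mapping.keys p \<union> Poly_Mapping.keys q"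
  have sum_S: "lin_ext f r = (\<Sum>m\<in>?S. of_int (Poly_Mapping.lookup r m) * f m)"
    if "Poly_Mapping.keys r \<subseteq> ?S" for r
    unfolding lin_ext_def by (rule sum.mono_neutral_left) (use that in \<open>auto simp: in_keys_iff\<close>)
  show ?thesis
    using keys_add[of p q] by (simp add: sum_S lookup_add sum.distrib algebra_simps)
qed

lemma lin_ext_0 [simp]: "lin_ext f 0 = 0"
  by (simp add: lin_ext_def)

lemma lin_ext_sum: "lin_ext f (\<Sum>x\<in>A. g x) = (\<Sum>x\<in>A. lin_ext f (g x))"
  by (induction A rule: infinite_finite_induct) (simp_all add: lin_ext_add)

lemma lin_ext_single: "lin_ext f (Poly_Mapping.single m c) = of_int c * f m"
  by (simp add: lin_ext_def)

lemma lin_ext_lmono: "lin_ext f (lmono m) = f m"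
  by (simp add: lin_ext_def lmono_def)

lemma lpoly_value_mult:
  assumes "\<forall>u. val u \<noteq> 0"
  shows "lpoly_value val (p * q) = lpoly_value val p * lpoly_value val q"
proof -
  have "p * q = (\<Sum>m\<in>Poly_Mapping.keys p. \<Sum>n\<in>Poly_Mapping.keys q.
       Poly_Mapping.single (m + n) (Poly_Mapping.lookup p m * Poly_Mapping.lookup q n))"
    by (subst (1 2) sum_single_lookup_keys[symmetric]) (simp add: sum_product mult_single)
  then have "lpoly_value val (p * q) = (\<Sum>m\<in>Poly_Mapping.keys p. \<Sum>n\<in>Poly_Mapping.keys q.
       of_int (Poly_Mapping.lookup p m) * mono_value val m *
       (of_int (Poly_Mapping.lookup q n) * mono_value val n))"
    by (simp add: lin_ext_sum lin_ext_single mono_value_add[OF assms] algebra_simps)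
  also have "\<dots> = lpoly_value val p * lpoly_value val q"
    by (simp add: lin_ext_def sum_product)
  finally show ?thesis .
qed

lemma lpoly_value_one [simp]: "lpoly_value val 1 = 1"
  using lin_ext_lmono[of "mono_value val" 0] by simp

lemma lpoly_value_power: "\<forall>u. val u \<noteq> 0 \<Longrightarrow> lpoly_value val (p ^ n) = lpoly_value val p ^ n"
  by (induction n) (simp_all add: lpoly_value_mult)

lemma lpoly_value_prod:
  "\<forall>u. val u \<noteq> 0 \<Longrightarrow> lpoly_value val (\<Prod>x\<in>A. g x) = (\<Prod>x\<in>A. lpoly_value val (g x))"
  by (induction A rule: infinite_finite_induct) (simp_all add: lpoly_value_mult)

lemma lpoly_value_lconst: "lpoly_value val (lconst c) = of_int c"
  by (simp add: lconst_def lin_ext_single)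

lemma lpoly_value_lvar: "lpoly_value val (lvar v) = val v"
  by (simp add: lvar_def lin_ext_lmono mono_value_def)

lemma lpoly_value_subst_var:
  assumes "\<forall>u. val u \<noteq> 0"
  shows "lpoly_value val (subst_var K g p) = lin_ext (pmono_value (val(K := lpoly_value val g))) p"
proof -
  have "lpoly_value val (subst_var K g p) = (\<Sum>m\<in>Poly_Mapping.keys p.
      of_int (Poly_Mapping.lookup p m) * (\<Prod>v\<in>Poly_Mapping.keys m.
        (if v = K then lpoly_value val g else val v) ^ nat (Poly_Mapping.lookup m v)))"
    unfolding subst_var_def
    by (simp only: lin_ext_sum lpoly_value_mult[OF assms] lpoly_value_lconst
        lpoly_value_prod[OF assms] lpoly_value_power[OF assms] if_distrib[where f = "lpoly_value val"] lpoly_value_lvar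
        del: if_image_distrib)
  then show ?thesis
    unfolding pmono_value_def lin_ext_def[of _ p] by (simp only: fun_upd_apply)
qed

lemma lpoly_value_Ints:
  assumes "in_sub K p" "val K = 1" "\<forall>u. val u \<in> \<int>"
  shows "lpoly_value val p \<in> \<int>"
  unfolding lin_ext_def mono_value_def
proof (intro Ints_sum Ints_mult Ints_prod)
  fix m u assume m: "m \<in> Poly_Mapping.keys p" and u: "u \<in> Poly_Mapping.keys m"
  show "val u powi Poly_Mapping.lookup m u \<in> \<int>"
  proof (cases "u = K")
    case False
    then have "0 \<le> Poly_Mapping.lookup m u" using assms(1) m unfolding in_sub_def by blast
    then show ?thesis using assms(3) by (simp add: power_int_def)
  qed (use assms in simp)
qed simp

section \<open>Points at which a monomial takes the value -1\<close>

definition root_minus_one :: "int \<Rightarrow> complex" where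
  "root_minus_one n = (if \<bar>n\<bar> = 1 then -1 else \<i>)"

lemma root_minus_one_nonzero: "root_minus_one n \<noteq> 0"
  by (simp add: root_minus_one_def)

lemma int_cases_abs_le_2: "\<bar>n::int\<bar> \<le> 2 \<Longrightarrow> n = -2 \<or> n = -1 \<or> n = 0 \<or> n = 1 \<or> n = 2"
  by auto

lemma root_minus_one_power_self: "n \<noteq> 0 \<Longrightarrow> \<bar>n\<bar> \<le> 2 \<Longrightarrow> root_minus_one n powi n = -1"
  using int_cases_abs_le_2[of n] by (auto simp: root_minus_one_def power_int_def power2_eq_square)

lemma root_minus_one_power_other:
  "n \<noteq> 0 \<Longrightarrow> \<bar>n\<bar> \<le> 2 \<Longrightarrow> \<bar>m\<bar> \<le> 2 \<Longrightarrow> m \<noteq> n \<Longrightarrow> m \<noteq> -n \<Longrightarrow> root_minus_one n powi m \<noteq> -1"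
  using int_cases_abs_le_2[of n] int_cases_abs_le_2[of m]
  by (auto simp: root_minus_one_def power_int_def power2_eq_square complex_eq_iff)

lemma exists_root_of_i: "n \<noteq> 0 \<Longrightarrow> \<bar>n\<bar> \<le> 2 \<Longrightarrow> \<exists>z::complex. z \<noteq> 0 \<and> z powi n = \<i>"
proof -
  assume "n \<noteq> 0" "\<bar>n\<bar> \<le> 2"
  then consider "n = -2" | "n = -1" | "n = 1" | "n = 2" by linarith
  then show ?thesis
  proof cases
    case 1 then show ?thesis
      by (intro exI[of _ "csqrt (-\<i>)"])
         (simp add: power_int_def power2_csqrt inverse_eq_divide power_divide complex_eq_iff)
  next
    case 2 then show ?thesis
      by (intro exI[of _ "-\<i>"]) (simp add: power_int_def inverse_eq_divide)
  next
    case 3 then show ?thesis by (intro exI[of _ "\<i>"]) simp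
  next
    case 4
    have e: "(csqrt \<i>)^2 = \<i>" by (rule power2_csqrt)
    then have "csqrt \<i> \<noteq> 0" by (metis complex_i_not_zero zero_power2)
    with e 4 show ?thesis
      by (intro exI[of _ "csqrt \<i>"]) (simp add: power_int_def del: csqrt_ii)
  qed
qed

definition bounded_exps :: "('v \<Rightarrow>\<^sub>0 int) \<Rightarrow> bool" where
  "bounded_exps \<alpha> \<longleftrightarrow> (\<forall>v. \<bar>Poly_Mapping.lookup \<alpha> v\<bar> \<le> 2)"

lemma exists_mono_value_eq_minus_one:
  assumes "bounded_exps \<alpha>" "\<alpha> \<noteq> 0"
  obtains val where "\<forall>u. val u \<noteq> 0" "mono_value val \<alpha> = -1"
proof -
  obtain v where v: "Poly_Mapping.lookup \<alpha> v \<noteq> 0"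
    using assms(2) by (metis lookup_zero poly_mapping_eqI)
  let ?val = "\<lambda>u. if u = v then root_minus_one (Poly_Mapping.lookup \<alpha> v) else 1"
  show ?thesis
    by (rule that[of ?val]) (use v assms(1) in
        \<open>simp_all add: root_minus_one_nonzero mono_value_single_point root_minus_one_power_self bounded_exps_def\<close>)
qed

lemma exists_mono_value_separating:
  assumes ba: "bounded_exps \<alpha>" and bb: "bounded_exps \<beta>"
    and a0: "\<alpha> \<noteq> 0" and ab1: "\<beta> \<noteq> \<alpha>" and ab2: "\<beta> \<noteq> - \<alpha>"
  obtains val where "\<forall>u. val u \<noteq> 0" "mono_value val \<alpha> = -1" "mono_value val \<beta> \<noteq> -1"
proof -
  let ?a = "Poly_Mapping.lookup \<alpha>" and ?b = "Poly_Mapping.lookup \<beta>"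
  have ba': "\<bar>?a v\<bar> \<le> 2" and bb': "\<bar>?b v\<bar> \<le> 2" for v
    using ba bb by (auto simp: bounded_exps_def)
  consider (coord) v where "?a v \<noteq> 0" "?b v \<noteq> ?a v" "?b v \<noteq> - ?a v"
    | (extra) u where "?a u = 0" "?b u \<noteq> 0" "\<forall>v. ?a v \<noteq> 0 \<longrightarrow> ?b v = ?a v \<or> ?b v = - ?a v"
    | (signs) "\<forall>v. ?a v = 0 \<longrightarrow> ?b v = 0" "\<forall>v. ?b v = ?a v \<or> ?b v = - ?a v"
    by (metis add.inverse_neutral)
  then show ?thesis
  proof cases
    case (coord v)
    let ?val = "\<lambda>u. if u = v then root_minus_one (?a v) else 1"
    show ?thesis
      by (rule that[of ?val])
         (use coord ba' bb' in \<open>simp_all add: mono_value_single_point root_minus_one_power_self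
            root_minus_one_power_other root_minus_one_nonzero\<close>)
  next
    case (extra u)
    \<comment> \<open>flipping the sign of x_u changes mono_value \<beta> but not mono_value \<alpha>\<close>
    obtain v0 where v0: "?a v0 \<noteq> 0" using a0 by (metis lookup_zero poly_mapping_eqI)
    have uv: "v0 \<noteq> u" using extra v0 by auto
    let ?val = "\<lambda>z w. if w = v0 then root_minus_one (?a v0) else if w = u then z else 1"
    have \<alpha>: "mono_value (?val z) \<alpha> = -1" for z
      using mono_value_two_points[OF uv, of "root_minus_one (?a v0)" z] extra v0 ba'
      by (simp add: root_minus_one_power_self)
    have \<beta>: "mono_value (?val (root_minus_one (?b u))) \<beta> = - mono_value (?val 1) \<beta>"
      using mono_value_two_points[OF uv] extra bb' by (simp add: root_minus_one_power_self)
    show ?thesis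
    proof (cases "mono_value (?val 1) \<beta> = -1")
      case True
      then show ?thesis using \<alpha> \<beta> by (intro that[of "?val (root_minus_one (?b u))"]) (auto simp: root_minus_one_nonzero)
    next
      case False
      then show ?thesis using \<alpha> by (intro that[of "?val 1"]) (auto simp: root_minus_one_nonzero)
    qed
  next
    case signs
    \<comment> \<open>\<beta> = -\<alpha> at u and \<beta> = \<alpha> at v: making both factors of x^\<alpha> equal to \<i> gives
       x^\<alpha> = -1 and x^\<beta> = 1\<close>
    obtain u where u: "?b u \<noteq> ?a u" using ab1 by (metis poly_mapping_eqI)
    obtain v where v: "?b v \<noteq> - ?a v" using ab2 by (metis poly_mapping_eqI lookup_uminus)
    have ua: "?a u \<noteq> 0" "?b u = - ?a u" using signs u by fastforce+
    have va: "?a v \<noteq> 0" "?b v = ?a v" using signs v by fastforce+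
    have uv: "u \<noteq> v" using ua va u by auto
    obtain zu where zu: "zu \<noteq> 0" "zu powi ?a u = \<i>" using exists_root_of_i[of "?a u"] ua ba' by auto
    obtain zv where zv: "zv \<noteq> 0" "zv powi ?a v = \<i>" using exists_root_of_i[of "?a v"] va ba' by auto
    let ?val = "\<lambda>w. if w = u then zu else if w = v then zv else 1"
    have "mono_value ?val \<alpha> = -1"
      using mono_value_two_points[OF uv, of zu zv] zu zv by simp
    moreover have "mono_value ?val \<beta> = 1"
      using mono_value_two_points[OF uv, of zu zv] zu zv ua va by (simp add: power_int_minus)
    ultimately show ?thesis using zu zv by (intro that[of ?val]) auto
  qed
qed

section \<open>The normalisation exponent for two binomials\<close>

definition exchange_pair :: "('v \<Rightarrow>\<^sub>0 int) \<Rightarrow> ('v \<Rightarrow>\<^sub>0 int) \<Rightarrow> bool" where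
  "exchange_pair a b \<longleftrightarrow> (\<forall>v. 0 \<le> Poly_Mapping.lookup a v \<and> Poly_Mapping.lookup a v \<le> 2 \<and>
     0 \<le> Poly_Mapping.lookup b v \<and> Poly_Mapping.lookup b v \<le> 2 \<and>
     (Poly_Mapping.lookup a v = 0 \<or> Poly_Mapping.lookup b v = 0))"

lemma exchange_pair_commute: "exchange_pair a b \<longleftrightarrow> exchange_pair b a"
  unfolding exchange_pair_def by blast

lemma exchange_pair_0: "exchange_pair 0 0"
  by (simp add: exchange_pair_def)

lemma bounded_exps_diff:
  assumes "exchange_pair a b"
  shows "bounded_exps (a - b)"
  unfolding bounded_exps_def lookup_minus
proof
  fix v
  show "\<bar>Poly_Mapping.lookup a v - Poly_Mapping.lookup b v\<bar> \<le> 2"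
    using assms[unfolded exchange_pair_def, rule_format, of v] by arith
qed

text \<open>a and b are the positive and negative parts of a - b.\<close>
lemma exchange_pair_diff_eq:
  assumes "exchange_pair a b" "exchange_pair c d" "a - b = c - d"
  shows "a = c \<and> b = d"
proof -
  have "Poly_Mapping.lookup a v = Poly_Mapping.lookup c v \<and> Poly_Mapping.lookup b v = Poly_Mapping.lookup d v"
    for v
    using assms(1,2) poly_mapping_eq_iff[THEN iffD1, OF assms(3)]
    unfolding exchange_pair_def by (auto simp: fun_eq_iff lookup_minus dest!: spec[of _ v])
  then show ?thesis by (auto intro: poly_mapping_eqI)
qed

definition exchange_subst :: "'v \<Rightarrow> 'v lpoly \<Rightarrow> 'v lpoly \<Rightarrow> 'v lpoly" where
  "exchange_subst K F G = subst_var K (F * lmono (Poly_Mapping.single K (-1))) G"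

lemma norm_exp_exchange_subst:
  "norm_exp Tr gl tw J K = (GREATEST a. sub_dvd K (exchange_poly Tr gl tw K ^ a)
      (exchange_subst K (exchange_poly Tr gl tw K) (exchange_poly Tr gl tw J)))"
  by (simp add: norm_exp_def exchange_subst_def)

lemma in_sub_exchange_subst: "in_sub K F \<Longrightarrow> in_sub K (exchange_subst K F G)"
  unfolding exchange_subst_def
  by (intro in_sub_subst_var in_sub_mult in_sub_lmono) (auto simp: lookup_single when_def)

lemma lpoly_value_binomial:
  "lpoly_value val (lmono c + lmono d) = mono_value val c + mono_value val d"
  by (simp add: lin_ext_add lin_ext_lmono)

lemma lpoly_value_exchange_subst:
  assumes "\<forall>u. val u \<noteq> 0"
  shows "lpoly_value val (exchange_subst K F (lmono a + lmono b)) =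
    pmono_value (val(K := lpoly_value val F / val K)) a + pmono_value (val(K := lpoly_value val F / val K)) b"
proof -
  have "lpoly_value val (lmono (Poly_Mapping.single K (-1))) = inverse (val K)"
    by (simp add: lin_ext_lmono mono_value_def power_int_minus)
  then show ?thesis
    using assms unfolding exchange_subst_def
    by (simp add: lpoly_value_subst_var lpoly_value_mult lin_ext_add lin_ext_lmono divide_inverse)
qed

lemma lpoly_value_ones_Ints: "lpoly_value (\<lambda>_. 1) p \<in> \<int>"
  unfolding lin_ext_def mono_value_def by (simp add: Ints_sum)

lemma sub_dvd_self_power_le_1:
  assumes "lpoly_value (\<lambda>_. 1) F = 2" "sub_dvd K (F ^ n) F"
  shows "n \<le> 1"
proof (rule ccontr)
  assume "\<not> n \<le> 1"
  then obtain k where k: "n = k + 2" by (metis add.commute le_Suc_ex not_less_eq_eq one_add_one Suc_1)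
  obtain c0 where "F = F ^ n * c0" using assms(2) unfolding sub_dvd_def by blast
  then have "2 = 2 ^ n * lpoly_value (\<lambda>_. 1) c0"
    using assms(1) by (metis lpoly_value_mult lpoly_value_power one_neq_zero)
  moreover obtain z where "lpoly_value (\<lambda>_. 1) c0 = of_int z"
    using lpoly_value_ones_Ints by (blast elim: Ints_cases)
  ultimately have "of_int 2 = (of_int (4 * (2 ^ k * z)) :: complex)"
    by (simp add: k power_add)
  then have "(2::int) = 4 * (2 ^ k * z)" by (simp only: of_int_eq_iff)
  then show False by presburger
qed

lemma Greatest_sub_dvd_self:
  assumes "lpoly_value (\<lambda>_. 1) F = 2"
  shows "(GREATEST n. sub_dvd K (F ^ n) F) = 1"
proof (rule Greatest_equality)
  show "sub_dvd K (F ^ 1) F"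
    unfolding sub_dvd_def by (intro exI[of _ 1]) (simp add: in_sub_one)
qed (rule sub_dvd_self_power_le_1[OF assms])

lemma lpoly_value_2 [simp]: "lpoly_value val 2 = 2"
  using lpoly_value_binomial[of val 0 0] by simp

lemma odd_power_two_add:
  "exchange_pair a b \<Longrightarrow> Poly_Mapping.lookup a v \<noteq> Poly_Mapping.lookup b v \<Longrightarrow>
    odd ((2::int) ^ nat (Poly_Mapping.lookup a v) + 2 ^ nat (Poly_Mapping.lookup b v))"
  unfolding exchange_pair_def by (cases "Poly_Mapping.lookup a v = 0") (auto dest!: spec[of _ v])

lemma not_sub_dvd_two_power:
  assumes ab: "exchange_pair a b" and "a \<noteq> b" and "1 \<le> n"
  shows "\<not> sub_dvd K (2 ^ n) (exchange_subst K 2 (lmono a + lmono b))"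
proof
  assume "sub_dvd K (2 ^ n) (exchange_subst K 2 (lmono a + lmono b))"
  then obtain c0 where c0: "exchange_subst K 2 (lmono a + lmono b) = 2 ^ n * c0" "in_sub K c0"
    unfolding sub_dvd_def by blast
  obtain v where v: "Poly_Mapping.lookup a v \<noteq> Poly_Mapping.lookup b v"
    and K_free: "v \<noteq> K \<Longrightarrow> Poly_Mapping.lookup a K = 0 \<and> Poly_Mapping.lookup b K = 0"
  proof (cases "Poly_Mapping.lookup a K = Poly_Mapping.lookup b K")
    case True
    obtain v where "Poly_Mapping.lookup a v \<noteq> Poly_Mapping.lookup b v"
      using \<open>a \<noteq> b\<close> by (metis poly_mapping_eqI)
    then show ?thesis using True ab that unfolding exchange_pair_def by metis
  qed (use that in blast)
  define w where "w u = (if u = v then 2 else 1 :: complex)" for u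
  have w2: "pmono_value (w(K := 2)) m = 2 ^ nat (Poly_Mapping.lookup m v)"
    if "v \<noteq> K \<Longrightarrow> Poly_Mapping.lookup m K = 0" for m
    by (subst pmono_value_cong[where g = w]) (use that in \<open>auto simp: w_def in_keys_iff
        pmono_value_single_point[of v 2, folded w_def]\<close>)
  define val where "val = w(K := 1)"
  have nz: "\<forall>u. val u \<noteq> 0" by (simp add: val_def w_def)
  have "lpoly_value val (exchange_subst K 2 (lmono a + lmono b)) =
      of_int (2 ^ nat (Poly_Mapping.lookup a v) + 2 ^ nat (Poly_Mapping.lookup b v))"
  proof -
    have "val(K := lpoly_value val 2 / val K) = w(K := 2)"
      by (simp add: val_def)
    moreover have "pmono_value (w(K := 2)) a = 2 ^ nat (Poly_Mapping.lookup a v)"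
      "pmono_value (w(K := 2)) b = 2 ^ nat (Poly_Mapping.lookup b v)"
      using K_free by (auto intro: w2)
    ultimately show ?thesis
      by (simp only: lpoly_value_exchange_subst[OF nz]) simp
  qed
  moreover have "lpoly_value val c0 \<in> \<int>"
    by (rule lpoly_value_Ints[OF c0(2)]) (simp_all add: val_def w_def)
  then obtain z where "lpoly_value val c0 = of_int z"
    by (blast elim: Ints_cases)
  ultimately have "of_int (2 ^ n * z) =
      (of_int (2 ^ nat (Poly_Mapping.lookup a v) + 2 ^ nat (Poly_Mapping.lookup b v)) :: complex)"
    using c0(1) by (simp add: lpoly_value_mult[OF nz] lpoly_value_power[OF nz])
  then have "(2::int) ^ n * z = 2 ^ nat (Poly_Mapping.lookup a v) + 2 ^ nat (Poly_Mapping.lookup b v)"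
    by (simp only: of_int_eq_iff)
  then show False
    using odd_power_two_add[OF ab v] \<open>1 \<le> n\<close> by (metis dvd_mult2 dvd_power order_less_le_trans zero_less_one)
qed

lemma pmono_value_add_nonzero:
  assumes "exchange_pair a b" "0 < Poly_Mapping.lookup a K" "\<forall>u. val u \<noteq> 0"
  shows "pmono_value (val(K := 0)) a + pmono_value (val(K := 0)) b \<noteq> 0"
proof -
  have "Poly_Mapping.lookup b K = 0"
    using assms(1,2) unfolding exchange_pair_def by (metis less_irrefl)
  then have "pmono_value (val(K := 0)) b \<noteq> 0"
    using assms(3) by (intro pmono_value_nonzero) (auto simp: in_keys_iff)
  moreover have "pmono_value (val(K := 0)) a = 0"
    using assms(2) by (intro pmono_value_eq_0) simp_all
  ultimately show ?thesis by simp
qed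

lemma pmono_value_upd_eq_mono_value:
  assumes "\<forall>v. 0 \<le> Poly_Mapping.lookup m v" "Poly_Mapping.lookup m K = 0"
  shows "pmono_value (val(K := x)) m = mono_value val m"
  using assms
  by (subst pmono_value_cong[where g = val]) (auto simp: in_keys_iff intro: pmono_value_eq_mono_value)

lemma not_sub_dvd_vanishing:
  assumes ab: "exchange_pair a b" and cd: "exchange_pair c d"
    and cK: "Poly_Mapping.lookup c K = 0" and dK: "Poly_Mapping.lookup d K = 0"
    and "c \<noteq> d" and ne: "lmono a + lmono b \<noteq> lmono c + lmono d" and "1 \<le> n"
  shows "\<not> sub_dvd K ((lmono c + lmono d) ^ n) (exchange_subst K (lmono c + lmono d) (lmono a + lmono b))"
proof
  let ?F = "lmono c + lmono d" and ?\<alpha> = "c - d"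
  assume "sub_dvd K (?F ^ n) (exchange_subst K ?F (lmono a + lmono b))"
  then obtain c0 where c0: "exchange_subst K ?F (lmono a + lmono b) = ?F ^ n * c0"
    unfolding sub_dvd_def by blast
  have \<alpha>: "bounded_exps ?\<alpha>" "?\<alpha> \<noteq> 0"
    using bounded_exps_diff[OF cd] \<open>c \<noteq> d\<close> by simp_all
  have vanish: "pmono_value (val(K := 0)) a + pmono_value (val(K := 0)) b = 0"
    if nz: "\<forall>u. val u \<noteq> 0" and "mono_value val ?\<alpha> = -1" for val
  proof -
    have "mono_value val c = - mono_value val d"
      using that mono_value_add[OF nz, of d ?\<alpha>] by simp
    then have F0: "lpoly_value val ?F = 0" by (simp add: lpoly_value_binomial)
    then have "lpoly_value val (exchange_subst K ?F (lmono a + lmono b)) = 0"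
      using \<open>1 \<le> n\<close> by (simp add: c0 lpoly_value_mult[OF nz] lpoly_value_power[OF nz])
    then show ?thesis by (simp add: lpoly_value_exchange_subst[OF nz] F0)
  qed
  obtain val0 where val0: "\<forall>u. val0 u \<noteq> 0" "mono_value val0 ?\<alpha> = -1"
    using exists_mono_value_eq_minus_one[OF \<alpha>] .
  have K_free: "Poly_Mapping.lookup m K = 0" if "exchange_pair m m'"
    "pmono_value (val0(K := 0)) m + pmono_value (val0(K := 0)) m' = 0" for m m'
  proof (rule ccontr)
    assume "Poly_Mapping.lookup m K \<noteq> 0"
    then have "0 < Poly_Mapping.lookup m K"
      using that(1)[unfolded exchange_pair_def, rule_format, of K] by simp
    then show False using pmono_value_add_nonzero[OF that(1) _ val0(1)] that(2) by blast
  qed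
  have aK: "Poly_Mapping.lookup a K = 0" and bK: "Poly_Mapping.lookup b K = 0"
    using K_free[OF ab] K_free[of b a] vanish[OF val0] exchange_pair_commute[THEN iffD1, OF ab]
    by (simp_all add: add.commute)
  have ac: "a - b \<noteq> ?\<alpha>"
    using exchange_pair_diff_eq[OF ab cd] ne by auto
  have ad: "a - b \<noteq> - ?\<alpha>"
    using exchange_pair_diff_eq[OF ab exchange_pair_commute[THEN iffD1, OF cd]] ne by (auto simp: add.commute)
  obtain val where nz: "\<forall>u. val u \<noteq> 0" and "mono_value val ?\<alpha> = -1" and \<beta>: "mono_value val (a - b) \<noteq> -1"
    using exists_mono_value_separating[OF \<alpha>(1) bounded_exps_diff[OF ab] \<alpha>(2) ac ad] .
  then have "mono_value val a + mono_value val b = 0"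
    using vanish ab aK bK unfolding exchange_pair_def by (simp add: pmono_value_upd_eq_mono_value)
  moreover have "mono_value val a = mono_value val b * mono_value val (a - b)"
    using mono_value_add[OF nz, of b "a - b"] by simp
  ultimately have "mono_value val b * (mono_value val (a - b) + 1) = 0"
    by (simp add: algebra_simps)
  then show False
    using mono_value_nonzero[OF nz] \<beta> by (simp add: add_eq_0_iff equation_minus_iff)
qed

lemma Greatest_exchange_subst_eq_0_iff:
  assumes ab: "exchange_pair a b" and cd: "exchange_pair c d"
    and cK: "Poly_Mapping.lookup c K = 0" and dK: "Poly_Mapping.lookup d K = 0"
  shows "(GREATEST n. sub_dvd K ((lmono c + lmono d) ^ n)
            (exchange_subst K (lmono c + lmono d) (lmono a + lmono b))) = 0
         \<longleftrightarrow> lmono a + lmono b \<noteq> lmono c + lmono d"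
    (is "(GREATEST n. ?P n) = 0 \<longleftrightarrow> ?G \<noteq> ?F")
proof
  assume G0: "(GREATEST n. ?P n) = 0"
  show "?G \<noteq> ?F"
  proof
    assume "?G = ?F"
    moreover have "exchange_subst K ?F ?F = ?F"
      unfolding exchange_subst_def using cd cK dK keys_add[of "lmono c" "lmono d"]
      by (intro subst_var_id) (auto simp: lmono_def exchange_pair_def)
    ultimately have "(GREATEST n. ?P n) = (GREATEST n. sub_dvd K (?F ^ n) ?F)"
      by simp
    also have "\<dots> = 1"
      by (rule Greatest_sub_dvd_self) (simp add: lpoly_value_binomial mono_value_def)
    finally show False using G0 by simp
  qed
next
  assume ne: "?G \<noteq> ?F"
  have notP: "\<not> ?P n" if "1 \<le> n" for n
  proof (cases "c = d")
    case True
    then have "c = 0" "d = 0"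
      using exchange_pair_diff_eq[OF cd exchange_pair_0] by simp_all
    moreover have "a \<noteq> b"
      using ne exchange_pair_diff_eq[OF ab exchange_pair_0] \<open>c = 0\<close> \<open>d = 0\<close> by auto
    ultimately show ?thesis
      using not_sub_dvd_two_power[OF ab _ that] by simp
  qed (use not_sub_dvd_vanishing[OF ab cd cK dK _ ne that] in simp)
  have "?P 0"
    unfolding sub_dvd_def using cd
    by (intro exI[of _ "exchange_subst K ?F ?G"] conjI in_sub_exchange_subst in_sub_add in_sub_lmono)
       (auto simp: exchange_pair_def)
  then show "(GREATEST n. ?P n) = 0"
  proof (rule Greatest_equality)
    show "n \<le> 0" if "?P n" for n
      using notP[of n] that by (cases n) simp_all
  qed
qed

section \<open>The quiver of the lifted triangulation\<close>

lemma lift_edge_eq: "lift_edge gl tw p = insert p (case gl (fst p) of None \<Rightarrow> {}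
    | Some \<sigma>' \<Rightarrow> {(\<sigma>', if tw (fst p) then \<not> snd p else snd p)})"
  unfolding lift_edge_def by (auto split: option.splits)

lemma finite_lift_edge: "finite (lift_edge gl tw p)"
  unfolding lift_edge_eq by (simp split: option.splits)

lemma card_lift_edge_le_2: "card (lift_edge gl tw p) \<le> 2"
  unfolding lift_edge_eq
  by (cases "gl (fst p)") (auto intro: order_trans[OF card_insert_le_m1] simp: card_insert_if)

lemma mem_lift_edge_self: "p \<in> lift_edge gl tw p"
  unfolding lift_edge_def by simp

lemma less_3_cases: "(s::nat) < 3 \<Longrightarrow> s = 0 \<or> s = 1 \<or> s = 2"
  by auto

lemma next_side_inj: "s < 3 \<Longrightarrow> s' < 3 \<Longrightarrow> next_side e s = next_side e s' \<Longrightarrow> s = s'"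
  unfolding next_side_def using less_3_cases[of s] less_3_cases[of s'] by (auto split: if_splits)

lemma next_side_neq: "s < 3 \<Longrightarrow> next_side e s \<noteq> s"
  unfolding next_side_def using less_3_cases[of s] by auto

text \<open>Each lifted side of a triangle of the cover has one successor and one predecessor,
so a lifted edge, which consists of at most two lifted sides, has at most two incoming
and at most two outgoing arrows in total.\<close>
lemma sum_arrows_le_2:
  assumes "finite Tr" "finite L" "X = lift_edge gl tw p"
  shows "(\<Sum>A\<in>L. arrows Tr gl tw A X) \<le> 2" "(\<Sum>A\<in>L. arrows Tr gl tw X A) \<le> 2"
proof -
  let ?U = "Tr \<times> {..<3::nat} \<times> (UNIV :: bool set)"
  define corners where "corners A B = {(t, s, \<epsilon>). t \<in> Tr \<and> s < 3 \<and>
      lift_edge gl tw ((t, s), \<epsilon>) = A \<and> lift_edge gl tw ((t, next_side \<epsilon> s), \<epsilon>) = B}" for A B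
  have arrows: "arrows Tr gl tw A B = card (corners A B)" for A B
    unfolding arrows_def corners_def by simp
  have fin: "finite (corners A B)" for A B
    by (rule finite_subset[of _ ?U]) (use assms(1) in \<open>auto simp: corners_def\<close>)
  have X: "finite X" "card X \<le> 2"
    using assms(3) finite_lift_edge card_lift_edge_le_2 by simp_all
  have "(\<Sum>A\<in>L. card (corners A X)) = card (\<Union>A\<in>L. corners A X)"
    by (rule card_UN_disjoint[symmetric]) (use assms(2) fin in \<open>auto simp: corners_def\<close>)
  also have "\<dots> \<le> card X"
    by (rule card_inj_on_le[where f = "\<lambda>(t, s, \<epsilon>). ((t, next_side \<epsilon> s), \<epsilon>)"])
       (auto simp: inj_on_def corners_def X dest: next_side_inj intro: mem_lift_edge_self)
  finally show "(\<Sum>A\<in>L. arrows Tr gl tw A X) \<le> 2"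
    using X by (simp add: arrows)
  have "(\<Sum>A\<in>L. card (corners X A)) = card (\<Union>A\<in>L. corners X A)"
    by (rule card_UN_disjoint[symmetric]) (use assms(2) fin in \<open>auto simp: corners_def\<close>)
  also have "\<dots> \<le> card X"
    by (rule card_inj_on_le[where f = "\<lambda>(t, s, \<epsilon>). ((t, s), \<epsilon>)"])
       (auto simp: inj_on_def corners_def X intro: mem_lift_edge_self)
  finally show "(\<Sum>A\<in>L. arrows Tr gl tw X A) \<le> 2"
    using X by (simp add: arrows)
qed

lemma finite_edge_of: "finite (edge_of gl \<sigma>)"
  unfolding edge_of_def by (cases "gl \<sigma>") auto

lemma finite_edges: "finite Tr \<Longrightarrow> finite (edges Tr gl)"
  unfolding edges_def sides_def by simp

lemma finite_arcs: "finite Tr \<Longrightarrow> finite (arcs Tr gl)"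
  unfolding arcs_def sides_def by simp

lemma abs_bsum_le_2:
  assumes "finite Tr" "I \<in> edges Tr gl"
  shows "\<bar>bsum Tr gl tw I J\<bar> \<le> 2"
proof -
  obtain \<sigma> where I: "I = edge_of gl \<sigma>" using assms(2) unfolding edges_def by auto
  have fin: "finite (lifts gl tw I)" unfolding lifts_def I using finite_edge_of[of gl \<sigma>] by simp
  let ?j = "chosen_lift gl tw J"
  have "bsum Tr gl tw I J = int (\<Sum>A\<in>lifts gl tw I. arrows Tr gl tw A ?j) -
      int (\<Sum>A\<in>lifts gl tw I. arrows Tr gl tw ?j A)"
    unfolding bsum_def bQ_def by (simp add: sum_subtractf)
  moreover have "(\<Sum>A\<in>lifts gl tw I. arrows Tr gl tw A ?j) \<le> 2"
    "(\<Sum>A\<in>lifts gl tw I. arrows Tr gl tw ?j A) \<le> 2"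
    using sum_arrows_le_2[OF assms(1) fin chosen_lift_def] by simp_all
  ultimately show ?thesis by linarith
qed

lemma obtain_arc_sides:
  assumes "valid_gluing Tr gl tw" "K \<in> arcs Tr gl"
  obtains \<sigma>0 \<sigma>1 where "K = {\<sigma>0, \<sigma>1}" "gl \<sigma>0 = Some \<sigma>1" "gl \<sigma>1 = Some \<sigma>0"
proof -
  obtain \<sigma>0 \<sigma>1 where "\<sigma>0 \<in> sides Tr" "gl \<sigma>0 = Some \<sigma>1" "K = edge_of gl \<sigma>0"
    using assms(2) unfolding arcs_def by auto
  moreover have "gl \<sigma>1 = Some \<sigma>0"
    using assms(1) \<open>gl \<sigma>0 = Some \<sigma>1\<close> unfolding valid_gluing_def by blast
  ultimately show ?thesis using that unfolding edge_of_def by auto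
qed

text \<open>Without a twisted gluing of two sides of the same triangle, two consecutive sides of a
triangle can belong to the same arc K only if they are glued to each other untwisted; then
they have the same lift, so the quiver has no arrows between different lifts of K.\<close>
lemma arrows_between_lifts_eq_0:
  assumes vg: "valid_gluing Tr gl tw"
    and untwisted: "\<forall>t s s'. gl (t, s) = Some (t, s') \<longrightarrow> \<not> tw (t, s)"
    and K: "K \<in> arcs Tr gl" and A: "A \<in> lifts gl tw K" and B: "B \<in> lifts gl tw K" and "A \<noteq> B"
  shows "arrows Tr gl tw A B = 0"
proof -
  obtain \<sigma>0 \<sigma>1 where K01: "K = {\<sigma>0, \<sigma>1}" "gl \<sigma>0 = Some \<sigma>1" "gl \<sigma>1 = Some \<sigma>0"
    using obtain_arc_sides[OF vg K] .
  have fst_mem: "fst p \<in> K" if p: "lift_edge gl tw p \<in> lifts gl tw K" for p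
  proof -
    obtain \<sigma> \<epsilon> where "lift_edge gl tw p = lift_edge gl tw (\<sigma>, \<epsilon>)" "\<sigma> \<in> K"
      using p unfolding lifts_def by blast
    then have "p \<in> lift_edge gl tw (\<sigma>, \<epsilon>)" using mem_lift_edge_self[of p gl tw] by simp
    then have "fst p = \<sigma> \<or> gl \<sigma> = Some (fst p)" unfolding lift_edge_def by auto
    then show ?thesis using K01 \<open>\<sigma> \<in> K\<close> by auto
  qed
  have same_lift: "lift_edge gl tw ((t, s), \<epsilon>) = lift_edge gl tw ((t, next_side \<epsilon> s), \<epsilon>)"
    if "(t, s) \<in> K" "(t, next_side \<epsilon> s) \<in> K" "s < 3" for t s \<epsilon>
  proof -
    have "(t, s) \<noteq> (t, next_side \<epsilon> s)" using next_side_neq[OF that(3), of \<epsilon>] by simp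
    then have g: "gl (t, s) = Some (t, next_side \<epsilon> s)" "gl (t, next_side \<epsilon> s) = Some (t, s)"
      using that(1,2) K01 by auto
    then have "\<not> tw (t, s)" "\<not> tw (t, next_side \<epsilon> s)" using untwisted by blast+
    then show ?thesis using g unfolding lift_edge_def by auto
  qed
  have no_corner: "{(t, s, \<epsilon>). t \<in> Tr \<and> s < 3 \<and> lift_edge gl tw ((t, s), \<epsilon>) = A \<and>
      lift_edge gl tw ((t, next_side \<epsilon> s), \<epsilon>) = B} = {}"
  proof -
    have False if "t \<in> Tr" "s < 3" "lift_edge gl tw ((t, s), \<epsilon>) = A"
      "lift_edge gl tw ((t, next_side \<epsilon> s), \<epsilon>) = B" for t s \<epsilon>
    proof -
      have "(t, s) \<in> K" "(t, next_side \<epsilon> s) \<in> K"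
        using fst_mem[of "((t, s), \<epsilon>)"] fst_mem[of "((t, next_side \<epsilon> s), \<epsilon>)"] that A B by simp_all
      then show False using same_lift[OF _ _ that(2)] that(3,4) \<open>A \<noteq> B\<close> by simp
    qed
    then show ?thesis by blast
  qed
  show ?thesis unfolding arrows_def no_corner by simp
qed

lemma bsum_self_eq_0:
  assumes vg: "valid_gluing Tr gl tw"
    and untwisted: "\<forall>t s s'. gl (t, s) = Some (t, s') \<longrightarrow> \<not> tw (t, s)"
    and K: "K \<in> arcs Tr gl"
  shows "bsum Tr gl tw K K = 0"
proof -
  obtain \<sigma>0 \<sigma>1 where "K = {\<sigma>0, \<sigma>1}" using obtain_arc_sides[OF vg K] .
  then have "(SOME \<sigma>. \<sigma> \<in> K) \<in> K" by (metis insertI1 someI)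
  then have j: "chosen_lift gl tw K \<in> lifts gl tw K"
    unfolding chosen_lift_def lifts_def by blast
  have "bQ Tr gl tw A (chosen_lift gl tw K) = 0" if "A \<in> lifts gl tw K" for A
    using arrows_between_lifts_eq_0[OF vg untwisted K that j]
      arrows_between_lifts_eq_0[OF vg untwisted K j that]
    unfolding bQ_def by (cases "A = chosen_lift gl tw K") auto
  then show ?thesis unfolding bsum_def by simp
qed

section \<open>Surfaces with a twisted self-gluing\<close>

context
  fixes Tr gl tw t s s'
  assumes ts: "triangulated_surface Tr gl tw"
    and self_glued: "gl (t, s) = Some (t, s')" and twisted: "tw (t, s)"
begin

lemma twisted_self_gluing_glued_sides:
  assumes "gl (t, n) \<noteq> None"
  shows "n = s \<or> n = s'"
proof -
  have vg: "valid_gluing Tr gl tw" and "no_moebius_arc gl tw"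
    using ts unfolding triangulated_surface_def by auto
  then have "gl (t, 3 - s - s') = None"
    using self_glued twisted unfolding no_moebius_arc_def by blast
  then have "n \<noteq> 3 - s - s'" using assms by auto
  moreover have lt3: "m < 3" if "gl (t, m) \<noteq> None" for m
  proof -
    have "(t, m) \<in> sides Tr" using vg that unfolding valid_gluing_def by blast
    then show ?thesis unfolding sides_def by auto
  qed
  moreover have "gl (t, s') = Some (t, s)" "s' \<noteq> s"
    using vg self_glued unfolding valid_gluing_def by blast+
  ultimately show ?thesis
    using lt3[OF assms] lt3[of s] lt3[of s'] self_glued
      less_3_cases[of n] less_3_cases[of s] less_3_cases[of s'] by fastforce
qed

lemma twisted_self_gluing_single_triangle:
  assumes "t' \<in> Tr"
  shows "t' = t"
proof -
  have vg: "valid_gluing Tr gl tw" and conn: "tri_connected Tr gl"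
    using ts unfolding triangulated_surface_def by auto
  have glued_back: "gl (t, s') = Some (t, s)"
    using vg self_glued unfolding valid_gluing_def by blast
  have "t \<in> Tr"
    using vg self_glued unfolding valid_gluing_def sides_def by blast
  then have "(t, t') \<in> {(a, b). \<exists>s s'. gl (a, s) = Some (b, s')}\<^sup>*"
    using conn assms unfolding tri_connected_def by blast
  then show ?thesis
  proof (induction rule: rtrancl_induct)
    case (step y z)
    then obtain n1 n2 where glued: "gl (t, n1) = Some (z, n2)" by auto
    then have "n1 = s \<or> n1 = s'" by (intro twisted_self_gluing_glued_sides) simp
    then show ?case using glued self_glued glued_back by auto
  qed simp
qed

lemma arcs_eq_singleton_if_twisted_self_gluing: "arcs Tr gl = {edge_of gl (t, s)}"
proof -
  have vg: "valid_gluing Tr gl tw" using ts unfolding triangulated_surface_def by auto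
  have glued_back: "gl (t, s') = Some (t, s)"
    using vg self_glued unfolding valid_gluing_def by blast
  have same_edge: "edge_of gl (t, n) = edge_of gl (t, s)" if "gl (t, n) \<noteq> None" for n
  proof -
    have "n = s \<or> n = s'" using that by (rule twisted_self_gluing_glued_sides)
    then show ?thesis using self_glued glued_back unfolding edge_of_def by auto
  qed
  show ?thesis
  proof (intro equalityI subsetI)
    fix X assume "X \<in> arcs Tr gl"
    then obtain t' n where "t' \<in> Tr" "gl (t', n) \<noteq> None" "X = edge_of gl (t', n)"
      unfolding arcs_def sides_def by auto
    then show "X \<in> {edge_of gl (t, s)}"
      using twisted_self_gluing_single_triangle same_edge by auto
  next
    have "(t, s) \<in> sides Tr"
      using vg self_glued unfolding valid_gluing_def by blast
    then show "X \<in> arcs Tr gl" if "X \<in> {edge_of gl (t, s)}" for X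
      using that self_glued unfolding arcs_def by auto
  qed
qed

end

section \<open>Normalisation of the exchange polynomials\<close>

definition pos_exps :: "nat set \<Rightarrow> (side \<Rightarrow> side option) \<Rightarrow> (side \<Rightarrow> bool) \<Rightarrow> side set \<Rightarrow> side set \<Rightarrow>\<^sub>0 int"
  where "pos_exps Tr gl tw J = (\<Sum>I \<in> edges Tr gl. Poly_Mapping.single I (max (bsum Tr gl tw I J) 0))"

definition neg_exps :: "nat set \<Rightarrow> (side \<Rightarrow> side option) \<Rightarrow> (side \<Rightarrow> bool) \<Rightarrow> side set \<Rightarrow> side set \<Rightarrow>\<^sub>0 int"
  where "neg_exps Tr gl tw J = (\<Sum>I \<in> edges Tr gl. Poly_Mapping.single I (max (- bsum Tr gl tw I J) 0))"

lemma exchange_poly_eq: "exchange_poly Tr gl tw J = lmono (pos_exps Tr gl tw J) + lmono (neg_exps Tr gl tw J)"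
  unfolding exchange_poly_def pos_exps_def neg_exps_def ..

lemma lookup_sum_single:
  "finite A \<Longrightarrow> Poly_Mapping.lookup (\<Sum>k\<in>A. Poly_Mapping.single k (f k)) v = (if v \<in> A then f v else 0)"
  by (simp add: lookup_sum lookup_single when_def)

lemma sum_single_eq_0_iff:
  "finite A \<Longrightarrow> (\<Sum>k\<in>A. Poly_Mapping.single k (f k)) = 0 \<longleftrightarrow> (\<forall>k\<in>A. f k = 0)"
  by (auto simp: poly_mapping_eq_iff fun_eq_iff lookup_sum_single)

lemma exchange_pair_exps:
  assumes "finite Tr"
  shows "exchange_pair (pos_exps Tr gl tw J) (neg_exps Tr gl tw J)"
  using abs_bsum_le_2[OF assms]
  by (auto simp: abs_le_iff exchange_pair_def pos_exps_def neg_exps_def lookup_sum_single finite_edges[OF assms])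

lemma norm_exp_eq_0_iff:
  assumes vg: "valid_gluing Tr gl tw"
    and untwisted: "\<forall>t s s'. gl (t, s) = Some (t, s') \<longrightarrow> \<not> tw (t, s)"
    and K: "K \<in> arcs Tr gl"
  shows "norm_exp Tr gl tw J K = 0 \<longleftrightarrow> exchange_poly Tr gl tw J \<noteq> exchange_poly Tr gl tw K"
proof -
  have fin: "finite Tr" using vg unfolding valid_gluing_def by simp
  have "Poly_Mapping.lookup (pos_exps Tr gl tw K) K = 0" "Poly_Mapping.lookup (neg_exps Tr gl tw K) K = 0"
    using bsum_self_eq_0[OF vg untwisted K]
    by (simp_all add: pos_exps_def neg_exps_def lookup_sum_single finite_edges[OF fin])
  then show ?thesis
    unfolding norm_exp_exchange_subst exchange_poly_eq
    by (intro Greatest_exchange_subst_eq_0_iff exchange_pair_exps fin)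
qed

lemma binomial_mult_lmono_eq_iff:
  "(lmono p + lmono q) * lmono e = lmono p + lmono q \<longleftrightarrow> e = (0 :: 'v \<Rightarrow>\<^sub>0 int)"
proof
  assume "(lmono p + lmono q) * lmono e = lmono p + lmono q"
  then have eq: "lmono (p + e) + lmono (q + e) = lmono p + lmono q"
    by (simp add: distrib_right lmono_add)
  have lookup_lmono: "Poly_Mapping.lookup (lmono x) y = (if x = y then 1 else 0)" for x y :: "'v \<Rightarrow>\<^sub>0 int"
    by (simp add: lmono_def lookup_single when_def)
  show "e = 0"
  proof (rule ccontr)
    assume "e \<noteq> 0"
    then have "p + e \<noteq> p" "q + e \<noteq> q" by auto
    then have "q + e = p" "p + e = q"
      using arg_cong[OF eq, of "\<lambda>f. Poly_Mapping.lookup f p"] arg_cong[OF eq, of "\<lambda>f. Poly_Mapping.lookup f q"]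
      by (auto simp: lookup_add lookup_lmono split: if_splits)
    then have "e + e = 0" by (metis add.assoc add_cancel_right_right)
    then have "e = 0" by (simp add: poly_mapping_eq_iff fun_eq_iff lookup_add)
    with \<open>e \<noteq> 0\<close> show False by simp
  qed
qed simp

lemma normalized_exchange_poly_eq_iff:
  assumes "finite Tr"
  shows "normalized_exchange_poly Tr gl tw J = exchange_poly Tr gl tw J \<longleftrightarrow>
    (\<forall>K \<in> arcs Tr gl - {J}. norm_exp Tr gl tw J K = 0)"
  unfolding normalized_exchange_poly_def exchange_poly_eq binomial_mult_lmono_eq_iff
  using finite_arcs[OF assms] by (simp add: sum_single_eq_0_iff)

theorem lemma4p12:
  fixes Tr :: "nat set" and gl :: "side \<Rightarrow> side option" and tw :: "side \<Rightarrow> bool"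
    and I :: "side set"
  assumes "triangulated_surface Tr gl tw"
    and "I \<in> arcs Tr gl"
  shows "normalized_exchange_poly Tr gl tw I = exchange_poly Tr gl tw I \<longleftrightarrow>
         (\<forall>J \<in> arcs Tr gl. J \<noteq> I \<longrightarrow> exchange_poly Tr gl tw I \<noteq> exchange_poly Tr gl tw J)"
proof -
  have vg: "valid_gluing Tr gl tw"
    using assms(1) unfolding triangulated_surface_def by simp
  then have "finite Tr" unfolding valid_gluing_def by simp
  note normalized = normalized_exchange_poly_eq_iff[OF this, of gl tw I]
  show ?thesis
  proof (cases "\<exists>t s s'. gl (t, s) = Some (t, s') \<and> tw (t, s)")
    case True
    then obtain t s s' where "gl (t, s) = Some (t, s')" "tw (t, s)" by blast
    then have "arcs Tr gl = {I}"
      using arcs_eq_singleton_if_twisted_self_gluing[OF assms(1)] assms(2) by simp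
    then show ?thesis using normalized by simp
  next
    case False
    then have "\<forall>t s s'. gl (t, s) = Some (t, s') \<longrightarrow> \<not> tw (t, s)" by blast
    then show ?thesis using normalized norm_exp_eq_0_iff[OF vg] by auto
  qed
qed

end
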